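(* Let $r,s\in\mathbb{N}$, $\alpha\in\mathbb{R}^r_{++}$, $p,p_u\in[1,\infty)$, $\rho_u>0$, and $\delta\in\mathbb{R}^r_{++}$. For every $x\in\mathbb{R}^s_+$ and every $u\in\mathbb{R}^{r\times s}_{++}$ with $\|u\|_{p_u}\le\rho_u$, $$\Big[\sum_{l=1}^r\delta_l^p\Big(\sum_{m=1}^s u_{lm}x_m\Big)^{p\alpha_l}\Big]^{1/p}\le\Psi^{\alpha}_{p,p_u}\big(\delta,\rho_u\|x\|_{p_u'}\big).$$ Moreover, if $(\delta,t)\le(\tilde\delta,\tilde t)$ componentwise (with $t,\tilde t>0$), then $\Psi^\alpha_{p,p_u}(\delta,t)\le\Psi^\alpha_{p,p_u}(\tilde\delta,\tilde t)\le\sum_{l=1}^r\tilde\delta_l\tilde t^{\alpha_l}$.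
   Context: $\mathbb{R}_{++}=(0,\infty)$; $\|u\|_{p_u}$ is the entrywise $\ell_{p_u}$ norm; $p_u'=p_u/(p_u-1)$ (with $p_u'=\infty$ if $p_u=1$). For $p,q\ge1$ and $\alpha\in\mathbb{R}^r_{++}$, define $\Psi^\alpha_{p,q}:\mathbb{R}^r_{++}\times\mathbb{R}_{++}\to\mathbb{R}_{++}$ by $$\Psi^{\alpha}_{p,q}(\delta,t)=\Big(\Big[\sum_{l\in J}(\delta_l t^{\alpha_l})^{\frac{pq}{q-\bar\alpha p}}\Big]^{1-\frac{\bar\alpha p}{q}}+\max_{j\in J^c}(\delta_j t^{\alpha_j})^p\Big)^{1/p},$$ where $J=\{l\in[r]:\alpha_l p<q\}$, $J^c=\{l\in[r]:\alpha_l p\ge q\}$, $\bar\alpha=\min_{l\in J}\alpha_l$, and an empty sum or empty maximum is taken to be $0$. *)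

theory Defs
  imports Complex_Main
begin

definition lp_norm :: "real \<Rightarrow> 'a set \<Rightarrow> ('a \<Rightarrow> real) \<Rightarrow> real" where
  "lp_norm p I f = (\<Sum>i\<in>I. \<bar>f i\<bar> powr p) powr (1 / p)"

definition sup_norm :: "'a set \<Rightarrow> ('a \<Rightarrow> real) \<Rightarrow> real" where
  "sup_norm I f = (if I = {} then 0 else Max ((\<lambda>i. \<bar>f i\<bar>) ` I))"

definition dual_norm :: "real \<Rightarrow> 'a set \<Rightarrow> ('a \<Rightarrow> real) \<Rightarrow> real" where
  "dual_norm p I f = (if p = 1 then sup_norm I f else lp_norm (p / (p - 1)) I f)"

text \<open>Psi^alpha_{p,q}(delta,t); vectors in R^r are functions on {..<r}.
  Empty sums/maxima are 0.\<close>
definition Psi :: "nat \<Rightarrow> (nat \<Rightarrow> real) \<Rightarrow> real \<Rightarrow> real \<Rightarrow> (nat \<Rightarrow> real) \<Rightarrow> real \<Rightarrow> real" where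
  "Psi r \<alpha> p q \<delta> t =
    (let J = {l \<in> {..<r}. \<alpha> l * p < q};
         Jc = {l \<in> {..<r}. \<alpha> l * p \<ge> q};
         ab = Min (\<alpha> ` J)
     in ((if J = {} then 0 else
           (\<Sum>l\<in>J. (\<delta> l * t powr \<alpha> l) powr (p * q / (q - ab * p))) powr (1 - ab * p / q))
         + (if Jc = {} then 0 else Max ((\<lambda>j. (\<delta> j * t powr \<alpha> j) powr p) ` Jc)))
        powr (1 / p))"

end

theory Submission
  imports Defs "HOL-Analysis.Convex"
begin

text \<open>
  For each row l, Hoelder's inequality gives \<open>\<Sum>m u_lm x_m \<le> \<parallel>u_l\<parallel>_q \<parallel>x\<parallel>_q'\<close>, so with
  \<open>t = \<rho> \<parallel>x\<parallel>_q'\<close> and weights \<open>w_l = \<parallel>u_l\<parallel>_q / \<rho>\<close>, which satisfy \<open>\<Sum>l w_l^q \<le> 1\<close>, the left-hand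
  side is at most \<open>(\<Sum>l a_l^p w_l^(p\<alpha>_l))^(1/p)\<close> with \<open>a_l = \<delta>_l t^\<alpha>_l\<close>. Bounding this uniformly in the
  weights splits along J and J^c: on J, where \<open>p\<alpha>_l < q\<close>, one bounds \<open>w_l^(p\<alpha>_l)\<close> by
  \<open>w_l^(p \<alpha>min)\<close> and applies Hoelder with exponents \<open>q/(q - p \<alpha>min)\<close> and \<open>q/(p \<alpha>min)\<close>; on J^c,
  where \<open>p\<alpha>_l \<ge> q\<close>, one has \<open>w_l^(p\<alpha>_l) \<le> w_l^q\<close> and the sum is at most the largest \<open>a_l^p\<close>.
  The bound by \<open>\<Sum>l \<delta>_l t^\<alpha>_l\<close> follows because l^k norms with k \<ge> 1 are dominated by the
  l^1 norm.
\<close>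

lemma Holder_inequality_sum:
  fixes f g :: "'a \<Rightarrow> real"
  assumes fin: "finite I" and f0: "\<forall>i\<in>I. 0 \<le> f i" and g0: "\<forall>i\<in>I. 0 \<le> g i"
    and pq: "p > 1" "q > 1" "1/p + 1/q = 1"
  shows "(\<Sum>i\<in>I. f i * g i) \<le> (\<Sum>i\<in>I. f i powr p) powr (1/p) * (\<Sum>i\<in>I. g i powr q) powr (1/q)"
proof -
  define A where "A = (\<Sum>i\<in>I. f i powr p)"
  define B where "B = (\<Sum>i\<in>I. g i powr q)"
  show ?thesis
  proof (cases "A = 0 \<or> B = 0")
    case True
    then have "\<forall>i\<in>I. f i = 0 \<or> g i = 0"
      using fin by (auto simp: A_def B_def sum_nonneg_eq_0_iff)
    then have "(\<Sum>i\<in>I. f i * g i) = 0" by (intro sum.neutral) auto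
    then show ?thesis by simp
  next
    case False
    then have Ap: "A > 0" "B > 0"
      unfolding A_def B_def by (metis less_eq_real_def powr_ge_zero sum_nonneg)+
    define A' where "A' = A powr (1/p)"
    define B' where "B' = B powr (1/q)"
    have A'p: "A' > 0" "B' > 0" using Ap by (auto simp: A'_def B'_def)
    have pw: "A' powr p = A" "B' powr q = B" using Ap pq
      by (auto simp: A'_def B'_def powr_powr)
    have Young: "f i * g i / (A' * B') \<le> f i powr p / (A * p) + g i powr q / (B * q)"
      if "i \<in> I" for i
    proof -
      have "(f i / A') * (g i / B') \<le> (f i / A') powr p / p + (g i / B') powr q / q"
        using Youngs_inequality[of p q "f i / A'" "g i / B'"] pq f0 g0 that A'p by auto
      also have "\<dots> = f i powr p / (A * p) + g i powr q / (B * q)"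
        using f0 g0 that A'p pw by (simp add: powr_divide)
      finally show ?thesis by simp
    qed
    have "(\<Sum>i\<in>I. f i * g i) / (A' * B') \<le> (\<Sum>i\<in>I. f i powr p / (A * p) + g i powr q / (B * q))"
      unfolding sum_divide_distrib by (rule sum_mono) (use Young in auto)
    also have "\<dots> = 1"
      using Ap pq by (simp add: sum.distrib A_def B_def flip: sum_divide_distrib)
    finally have "(\<Sum>i\<in>I. f i * g i) \<le> A' * B'" using A'p by (simp add: divide_le_eq)
    then show ?thesis by (simp add: A'_def B'_def A_def B_def)
  qed
qed

lemma sum_powr_root_le_sum:
  fixes a :: "'a \<Rightarrow> real"
  assumes fin: "finite I" and a0: "\<forall>i\<in>I. 0 \<le> a i" and k: "k \<ge> 1"
  shows "(\<Sum>i\<in>I. a i powr k) powr (1/k) \<le> (\<Sum>i\<in>I. a i)"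
proof -
  define S where "S = (\<Sum>i\<in>I. a i)"
  have S0: "S \<ge> 0" using a0 by (simp add: S_def sum_nonneg)
  have "a i powr k \<le> S powr (k - 1) * a i" if "i \<in> I" for i
  proof -
    have "a i \<le> S" unfolding S_def using fin a0 that by (intro member_le_sum) auto
    then have "a i powr (k - 1) \<le> S powr (k - 1)" using a0 that k by (intro powr_mono2) auto
    then have "a i powr (k - 1) * a i \<le> S powr (k - 1) * a i"
      using a0 that by (intro mult_right_mono) auto
    moreover have "a i powr (k - 1) * a i = a i powr k"
      using a0 that k by (cases "a i = 0") (auto simp: powr_diff)
    ultimately show ?thesis by simp
  qed
  then have "(\<Sum>i\<in>I. a i powr k) \<le> S powr (k - 1) * S"
    unfolding S_def sum_distrib_left by (intro sum_mono) (auto simp: S_def)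
  also have "\<dots> = S powr k"
    using S0 k by (cases "S = 0") (auto simp: powr_diff)
  finally have "(\<Sum>i\<in>I. a i powr k) powr (1/k) \<le> (S powr k) powr (1/k)"
    using k by (intro powr_mono2) (auto intro: sum_nonneg)
  also have "\<dots> = S" using S0 k by (simp add: powr_powr)
  finally show ?thesis by (simp add: S_def)
qed

lemma powr_add_le_add_powr:
  fixes x y p :: real
  assumes "0 \<le> x" "0 \<le> y" "p \<ge> 1"
  shows "x powr p + y powr p \<le> (x + y) powr p"
proof -
  have "(x powr p + y powr p) powr (1/p) \<le> x + y"
    using sum_powr_root_le_sum[of "{True, False}" "\<lambda>b. if b then x else y" p] assms by simp
  then have "((x powr p + y powr p) powr (1/p)) powr p \<le> (x + y) powr p"
    using assms by (intro powr_mono2) auto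
  then show ?thesis using assms by (simp add: powr_powr)
qed

lemma lp_norm_nonneg: "0 \<le> lp_norm p I f"
  by (simp add: lp_norm_def)

lemma dual_norm_nonneg: "finite I \<Longrightarrow> 0 \<le> dual_norm q I x"
  by (auto simp: dual_norm_def lp_norm_def sup_norm_def Max_ge_iff)

lemma sum_mult_le_lp_norm_dual_norm:
  fixes u x :: "'a \<Rightarrow> real"
  assumes "finite I" "q \<ge> 1" "\<forall>i\<in>I. 0 \<le> u i" "\<forall>i\<in>I. 0 \<le> x i"
  shows "(\<Sum>i\<in>I. u i * x i) \<le> lp_norm q I u * dual_norm q I x"
proof -
  have abs_u: "(\<Sum>i\<in>I. \<bar>u i\<bar> powr q) = (\<Sum>i\<in>I. u i powr q)" using assms(3) by simp
  show ?thesis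
  proof (cases "q = 1")
    case True
    have "x i \<le> sup_norm I x" if "i \<in> I" for i
      using assms(1) that by (auto simp: sup_norm_def Max_ge_iff intro!: bexI[of _ i])
    then have "(\<Sum>i\<in>I. u i * x i) \<le> (\<Sum>i\<in>I. u i * sup_norm I x)"
      using assms(3) by (intro sum_mono mult_left_mono) auto
    also have "\<dots> = lp_norm q I u * dual_norm q I x"
      using True assms(3) abs_u by (simp add: lp_norm_def dual_norm_def sum_nonneg flip: sum_distrib_right)
    finally show ?thesis .
  next
    case False
    define q' where "q' = q / (q - 1)"
    have "q > 1" "q' > 1" "1/q + 1/q' = 1"
      using False assms(2) by (auto simp: q'_def field_simps)
    then show ?thesis
      using Holder_inequality_sum[of I u x q q'] assms False abs_u
      by (simp add: lp_norm_def dual_norm_def flip: q'_def)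
  qed
qed

lemma lp_norm_product_powr:
  assumes "finite I" "finite K" "q > 0"
  shows "lp_norm q (I \<times> K) (\<lambda>(l, m). u l m) powr q = (\<Sum>l\<in>I. lp_norm q K (u l) powr q)"
  using assms by (simp add: lp_norm_def powr_powr sum_nonneg sum.cartesian_product case_prod_unfold)

lemma weighted_term_le:
  fixes \<delta> t w y \<alpha> p :: real
  assumes "0 \<le> \<delta>" "0 \<le> t" "0 \<le> w" "0 \<le> y" "y \<le> w * t" "0 \<le> p * \<alpha>"
  shows "\<delta> powr p * y powr (p * \<alpha>) \<le> (\<delta> * t powr \<alpha>) powr p * w powr (p * \<alpha>)"
proof -
  have "y powr (p * \<alpha>) \<le> (w * t) powr (p * \<alpha>)" using assms by (intro powr_mono2) auto
  also have "\<dots> = t powr (p * \<alpha>) * w powr (p * \<alpha>)" using assms by (simp add: powr_mult)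
  finally have "\<delta> powr p * y powr (p * \<alpha>) \<le> \<delta> powr p * (t powr (p * \<alpha>) * w powr (p * \<alpha>))"
    by (intro mult_left_mono) auto
  also have "\<dots> = (\<delta> * t powr \<alpha>) powr p * w powr (p * \<alpha>)"
    using assms by (simp add: powr_mult powr_powr mult.commute)
  finally show ?thesis .
qed

definition Psi_low :: "'a set \<Rightarrow> ('a \<Rightarrow> real) \<Rightarrow> real \<Rightarrow> real \<Rightarrow> ('a \<Rightarrow> real) \<Rightarrow> real" where
  "Psi_low J \<alpha> p q a =
    (if J = {} then 0
     else let m = Min (\<alpha> ` J) in (\<Sum>l\<in>J. a l powr (p * q / (q - m * p))) powr (1 - m * p / q))"

definition Psi_high :: "'a set \<Rightarrow> real \<Rightarrow> ('a \<Rightarrow> real) \<Rightarrow> real" where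
  "Psi_high K p a = (if K = {} then 0 else Max ((\<lambda>j. a j powr p) ` K))"

lemma Min_subcritical:
  fixes \<alpha> :: "'a \<Rightarrow> real"
  assumes "finite J" "J \<noteq> {}" "\<forall>l\<in>J. 0 < \<alpha> l \<and> \<alpha> l * p < q" "0 \<le> p"
  shows "0 < Min (\<alpha> ` J)" "Min (\<alpha> ` J) * p < q" "0 < q"
proof -
  have "Min (\<alpha> ` J) \<in> \<alpha> ` J" using assms(1,2) by simp
  then obtain l where "l \<in> J" "Min (\<alpha> ` J) = \<alpha> l" by blast
  then show "0 < Min (\<alpha> ` J)" "Min (\<alpha> ` J) * p < q" using assms(3) by auto
  then show "0 < q" using assms(4) by (meson le_less_trans mult_nonneg_nonneg less_imp_le)
qed

lemma Psi_low_mono: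
  assumes "finite J" "\<forall>l\<in>J. 0 < \<alpha> l \<and> \<alpha> l * p < q" "p \<ge> 1"
    and "\<forall>l\<in>J. 0 \<le> a l \<and> a l \<le> b l"
  shows "Psi_low J \<alpha> p q a \<le> Psi_low J \<alpha> p q b"
proof (cases "J = {}")
  case False
  define m where "m = Min (\<alpha> ` J)"
  have m: "0 < m" "m * p < q" "0 < q"
    using Min_subcritical[OF assms(1) False assms(2)] assms(3) by (simp_all add: m_def)
  have "(\<Sum>l\<in>J. a l powr (p * q / (q - m * p))) \<le> (\<Sum>l\<in>J. b l powr (p * q / (q - m * p)))"
    using assms m by (intro sum_mono powr_mono2) auto
  moreover have "0 \<le> 1 - m * p / q" using m by simp
  ultimately show ?thesis
    using False by (simp add: Psi_low_def Let_def m_def[symmetric] powr_mono2 sum_nonneg)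
qed (simp add: Psi_low_def)

lemma Psi_low_le_sum_powr:
  assumes "finite J" "\<forall>l\<in>J. 0 < \<alpha> l \<and> \<alpha> l * p < q" "p \<ge> 1" "\<forall>l\<in>J. 0 \<le> a l"
  shows "Psi_low J \<alpha> p q a \<le> (\<Sum>l\<in>J. a l) powr p"
proof (cases "J = {}")
  case False
  define m where "m = Min (\<alpha> ` J)"
  define k where "k = p * q / (q - m * p)"
  have m: "0 < m" "m * p < q" "0 < q"
    using Min_subcritical[OF assms(1) False assms(2)] assms(3) by (simp_all add: m_def)
  have "k \<ge> p" using m assms(3) by (simp add: k_def le_divide_eq)
  have "1 - m * p / q = p * (1 / k)" using m assms(3) by (simp add: k_def field_simps)
  then have "Psi_low J \<alpha> p q a = ((\<Sum>l\<in>J. a l powr k) powr (1 / k)) powr p"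
    using False by (simp add: Psi_low_def Let_def m_def[symmetric] k_def[symmetric] powr_powr mult.commute)
  also have "\<dots> \<le> (\<Sum>l\<in>J. a l) powr p"
    using assms \<open>k \<ge> p\<close> by (intro powr_mono2 sum_powr_root_le_sum) auto
  finally show ?thesis .
qed (simp add: Psi_low_def)

lemma weighted_sum_le_Psi_low:
  assumes "finite J" "\<forall>l\<in>J. 0 < \<alpha> l \<and> \<alpha> l * p < q" "p \<ge> 1"
    and "\<forall>l\<in>J. 0 \<le> a l \<and> 0 \<le> w l \<and> w l \<le> 1" "(\<Sum>l\<in>J. w l powr q) \<le> 1"
  shows "(\<Sum>l\<in>J. a l powr p * w l powr (p * \<alpha> l)) \<le> Psi_low J \<alpha> p q a"
proof (cases "J = {}")
  case False
  define m where "m = Min (\<alpha> ` J)"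
  have m: "0 < m" "m * p < q" "0 < q"
    using Min_subcritical[OF assms(1) False assms(2)] assms(3) by (simp_all add: m_def)
  define s' where "s' = q / (q - m * p)"
  define s where "s = q / (m * p)"
  have s: "s > 1" "s' > 1" "1/s' + 1/s = 1"
    using m assms(3) by (auto simp: s_def s'_def field_simps)
  have "(\<Sum>l\<in>J. a l powr p * w l powr (p * \<alpha> l)) \<le> (\<Sum>l\<in>J. a l powr p * w l powr (p * m))"
    using assms by (intro sum_mono mult_left_mono powr_mono') (auto simp: m_def)
  also have "\<dots> \<le> (\<Sum>l\<in>J. (a l powr p) powr s') powr (1/s') * (\<Sum>l\<in>J. (w l powr (p * m)) powr s) powr (1/s)"
    using assms(1) s by (intro Holder_inequality_sum) auto
  also have "\<dots> = (\<Sum>l\<in>J. a l powr (p * q / (q - m * p))) powr (1 - m * p / q) * (\<Sum>l\<in>J. w l powr q) powr (1/s)"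
    using m assms(3) by (simp add: powr_powr s_def s'_def field_simps)
  also have "\<dots> \<le> (\<Sum>l\<in>J. a l powr (p * q / (q - m * p))) powr (1 - m * p / q)"
  proof (rule mult_left_le)
    show "(\<Sum>l\<in>J. w l powr q) powr (1/s) \<le> 1"
      using assms(5) s powr_mono2[of "1/s" "\<Sum>l\<in>J. w l powr q" 1] by (simp add: sum_nonneg)
  qed simp
  finally show ?thesis using False by (simp add: Psi_low_def Let_def m_def)
qed (simp add: Psi_low_def)

lemma Psi_high_nonneg: "finite K \<Longrightarrow> 0 \<le> Psi_high K p a"
  by (auto simp: Psi_high_def Max_ge_iff)

lemma Psi_high_mono:
  assumes "finite K" "p \<ge> 1" "\<forall>l\<in>K. 0 \<le> a l \<and> a l \<le> b l"
  shows "Psi_high K p a \<le> Psi_high K p b"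
proof (cases "K = {}")
  case False
  have "a l powr p \<le> Max ((\<lambda>j. b j powr p) ` K)" if "l \<in> K" for l
  proof -
    have "a l powr p \<le> b l powr p" using assms that by (intro powr_mono2) auto
    also have "\<dots> \<le> Max ((\<lambda>j. b j powr p) ` K)" using assms(1) that by simp
    finally show ?thesis .
  qed
  then show ?thesis using assms(1) False by (auto simp: Psi_high_def intro: Max.boundedI)
qed (simp add: Psi_high_def)

lemma Psi_high_le_sum_powr:
  assumes "finite K" "p \<ge> 1" "\<forall>l\<in>K. 0 \<le> a l"
  shows "Psi_high K p a \<le> (\<Sum>l\<in>K. a l) powr p"
  using assms by (auto simp: Psi_high_def intro!: Max.boundedI powr_mono2 member_le_sum)

lemma weighted_sum_le_Psi_high:
  assumes "finite K" "\<forall>l\<in>K. q \<le> p * \<alpha> l"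
    and "\<forall>l\<in>K. 0 \<le> w l \<and> w l \<le> 1" "(\<Sum>l\<in>K. w l powr q) \<le> 1"
  shows "(\<Sum>l\<in>K. a l powr p * w l powr (p * \<alpha> l)) \<le> Psi_high K p a"
proof -
  have "(\<Sum>l\<in>K. a l powr p * w l powr (p * \<alpha> l)) \<le> (\<Sum>l\<in>K. Psi_high K p a * w l powr q)"
    using assms Psi_high_nonneg[OF assms(1), of p a]
    by (intro sum_mono mult_mono powr_mono') (auto simp: Psi_high_def)
  also have "\<dots> \<le> Psi_high K p a"
    using assms(4) Psi_high_nonneg[OF assms(1), of p a] by (simp add: mult_left_le flip: sum_distrib_left)
  finally show ?thesis .
qed

definition Psi_pow :: "nat \<Rightarrow> (nat \<Rightarrow> real) \<Rightarrow> real \<Rightarrow> real \<Rightarrow> (nat \<Rightarrow> real) \<Rightarrow> real" where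
  "Psi_pow r \<alpha> p q a =
    Psi_low {l \<in> {..<r}. \<alpha> l * p < q} \<alpha> p q a + Psi_high {l \<in> {..<r}. \<alpha> l * p \<ge> q} p a"

lemma Psi_eq_Psi_pow: "Psi r \<alpha> p q \<delta> t = Psi_pow r \<alpha> p q (\<lambda>l. \<delta> l * t powr \<alpha> l) powr (1 / p)"
  by (simp only: Psi_def Psi_pow_def Psi_low_def Psi_high_def Let_def)

lemma sum_lessThan_split_critical:
  fixes f :: "nat \<Rightarrow> 'b::comm_monoid_add" and \<alpha> :: "nat \<Rightarrow> real" and p q :: real
  shows "(\<Sum>l<r. f l) = (\<Sum>l\<in>{l \<in> {..<r}. \<alpha> l * p < q}. f l) + (\<Sum>l\<in>{l \<in> {..<r}. \<alpha> l * p \<ge> q}. f l)"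
proof -
  have "(\<Sum>l<r. f l) = (\<Sum>l\<in>{l \<in> {..<r}. \<alpha> l * p < q} \<union> {l \<in> {..<r}. \<alpha> l * p \<ge> q}. f l)"
    by (rule sum.cong) (auto simp: not_le)
  also have "\<dots> = (\<Sum>l\<in>{l \<in> {..<r}. \<alpha> l * p < q}. f l) + (\<Sum>l\<in>{l \<in> {..<r}. \<alpha> l * p \<ge> q}. f l)"
    by (rule sum.union_disjoint) auto
  finally show ?thesis .
qed

lemma Psi_pow_nonneg: "0 \<le> Psi_pow r \<alpha> p q a"
  by (simp add: Psi_pow_def Psi_low_def Psi_high_nonneg)

lemma Psi_pow_mono:
  assumes "\<forall>l<r. 0 < \<alpha> l" "p \<ge> 1" "\<forall>l<r. 0 \<le> a l \<and> a l \<le> b l"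
  shows "Psi_pow r \<alpha> p q a \<le> Psi_pow r \<alpha> p q b"
  unfolding Psi_pow_def using assms by (intro add_mono Psi_low_mono Psi_high_mono) auto

lemma Psi_pow_le_sum_powr:
  assumes "\<forall>l<r. 0 < \<alpha> l" "p \<ge> 1" "\<forall>l<r. 0 \<le> a l"
  shows "Psi_pow r \<alpha> p q a \<le> (\<Sum>l<r. a l) powr p"
proof -
  let ?J = "{l \<in> {..<r}. \<alpha> l * p < q}" and ?K = "{l \<in> {..<r}. \<alpha> l * p \<ge> q}"
  have "Psi_pow r \<alpha> p q a \<le> (\<Sum>l\<in>?J. a l) powr p + (\<Sum>l\<in>?K. a l) powr p"
    unfolding Psi_pow_def using assms
    by (intro add_mono Psi_low_le_sum_powr Psi_high_le_sum_powr) auto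
  also have "\<dots> \<le> (\<Sum>l<r. a l) powr p"
    unfolding sum_lessThan_split_critical[of a r \<alpha> p q] using assms
    by (intro powr_add_le_add_powr sum_nonneg) auto
  finally show ?thesis .
qed

lemma weighted_sum_le_Psi_pow:
  assumes "\<forall>l<r. 0 < \<alpha> l" "p \<ge> 1" "q > 0" "\<forall>l<r. 0 \<le> a l \<and> 0 \<le> w l"
    and "(\<Sum>l<r. w l powr q) \<le> 1"
  shows "(\<Sum>l<r. a l powr p * w l powr (p * \<alpha> l)) \<le> Psi_pow r \<alpha> p q a"
proof -
  let ?J = "{l \<in> {..<r}. \<alpha> l * p < q}" and ?K = "{l \<in> {..<r}. \<alpha> l * p \<ge> q}"
  have w_le_1: "w l \<le> 1" if "l < r" for l
  proof (rule ccontr)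
    assume "\<not> w l \<le> 1"
    then have "1 < w l powr q" using assms(3) by (intro gr_one_powr) auto
    also have "\<dots> \<le> (\<Sum>l<r. w l powr q)" using that by (intro member_le_sum) auto
    finally show False using assms(5) by simp
  qed
  have subsum_le_1: "(\<Sum>l\<in>S. w l powr q) \<le> 1" if "S \<subseteq> {..<r}" for S
    using assms(5) that by (meson order_trans finite_lessThan powr_ge_zero sum_mono2)
  have "(\<Sum>l\<in>?J. w l powr q) \<le> 1" "(\<Sum>l\<in>?K. w l powr q) \<le> 1"
    by (rule subsum_le_1, blast)+
  then show ?thesis
    unfolding sum_lessThan_split_critical[of _ r \<alpha> p q] Psi_pow_def using assms w_le_1
    by (intro add_mono weighted_sum_le_Psi_low weighted_sum_le_Psi_high)
      (auto simp: mult.commute)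
qed

lemma Psi_mono:
  assumes "\<forall>l<r. 0 < \<alpha> l" "p \<ge> 1" "\<forall>l<r. 0 \<le> \<delta> l \<and> \<delta> l \<le> \<delta>' l" "0 \<le> t" "t \<le> t'"
  shows "Psi r \<alpha> p q \<delta> t \<le> Psi r \<alpha> p q \<delta>' t'"
proof -
  have "\<forall>l<r. 0 \<le> \<delta> l * t powr \<alpha> l \<and> \<delta> l * t powr \<alpha> l \<le> \<delta>' l * t' powr \<alpha> l"
    using assms by (auto intro!: mult_mono powr_mono2)
  then show ?thesis
    unfolding Psi_eq_Psi_pow using assms(2)
    by (intro powr_mono2 Psi_pow_mono[OF assms(1,2)] Psi_pow_nonneg) auto
qed

lemma Psi_le_sum:
  assumes "\<forall>l<r. 0 < \<alpha> l" "p \<ge> 1" "\<forall>l<r. 0 \<le> \<delta> l"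
  shows "Psi r \<alpha> p q \<delta> t \<le> (\<Sum>l<r. \<delta> l * t powr \<alpha> l)"
proof -
  have a0: "\<forall>l<r. 0 \<le> \<delta> l * t powr \<alpha> l" using assms(3) by simp
  have "Psi r \<alpha> p q \<delta> t \<le> ((\<Sum>l<r. \<delta> l * t powr \<alpha> l) powr p) powr (1/p)"
    unfolding Psi_eq_Psi_pow using assms(2)
    by (intro powr_mono2 Psi_pow_le_sum_powr[OF assms(1,2) a0] Psi_pow_nonneg) auto
  also have "\<dots> = (\<Sum>l<r. \<delta> l * t powr \<alpha> l)"
  proof -
    have "0 \<le> (\<Sum>l<r. \<delta> l * t powr \<alpha> l)" using a0 by (intro sum_nonneg) auto
    then show ?thesis using assms(2) by (simp add: powr_powr)
  qed
  finally show ?thesis .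
qed

lemma Psi_bound:
  fixes u :: "nat \<Rightarrow> nat \<Rightarrow> real" and x \<delta> \<alpha> :: "nat \<Rightarrow> real"
  assumes "\<forall>l<r. 0 < \<alpha> l" "p \<ge> 1" "q \<ge> 1" "\<rho> > 0" "\<forall>l<r. 0 \<le> \<delta> l"
    and "\<forall>m<s. 0 \<le> x m" "\<forall>l<r. \<forall>m<s. 0 \<le> u l m"
    and "lp_norm q ({..<r} \<times> {..<s}) (\<lambda>(l, m). u l m) \<le> \<rho>"
  shows "(\<Sum>l<r. \<delta> l powr p * (\<Sum>m<s. u l m * x m) powr (p * \<alpha> l)) powr (1 / p)
           \<le> Psi r \<alpha> p q \<delta> (\<rho> * dual_norm q {..<s} x)"
proof -
  define t where "t = \<rho> * dual_norm q {..<s} x"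
  define w where "w l = lp_norm q {..<s} (u l) / \<rho>" for l
  have t0: "0 \<le> t" using assms(4) dual_norm_nonneg[of "{..<s}" q x] by (simp add: t_def)
  have w0: "0 \<le> w l" for l using assms(4) by (simp add: w_def lp_norm_nonneg)
  have row_le: "(\<Sum>m<s. u l m * x m) \<le> w l * t" if "l < r" for l
    using sum_mult_le_lp_norm_dual_norm[of "{..<s}" q "u l" x] assms(3,4,6,7) that
    by (simp add: w_def t_def)
  have "(\<Sum>l<r. w l powr q) = lp_norm q ({..<r} \<times> {..<s}) (\<lambda>(l, m). u l m) powr q / \<rho> powr q"
    using assms(3,4) by (simp add: w_def powr_divide lp_norm_nonneg lp_norm_product_powr sum_divide_distrib)
  also have "\<dots> \<le> 1"
    using assms(3,4,8) powr_mono2[of q _ \<rho>] by (simp add: lp_norm_nonneg)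
  finally have w_sum: "(\<Sum>l<r. w l powr q) \<le> 1" .
  have "(\<Sum>l<r. \<delta> l powr p * (\<Sum>m<s. u l m * x m) powr (p * \<alpha> l))
      \<le> (\<Sum>l<r. (\<delta> l * t powr \<alpha> l) powr p * w l powr (p * \<alpha> l))"
    using assms t0 w0 row_le
    by (intro sum_mono weighted_term_le) (auto intro!: sum_nonneg)
  also have "\<dots> \<le> Psi_pow r \<alpha> p q (\<lambda>l. \<delta> l * t powr \<alpha> l)"
    using assms w0 w_sum by (intro weighted_sum_le_Psi_pow) auto
  finally show ?thesis
    unfolding Psi_eq_Psi_pow t_def[symmetric] using assms(2)
    by (intro powr_mono2) (auto intro!: sum_nonneg)
qed

theorem mainTheorem9:
  fixes r s :: nat and \<alpha> \<delta> :: "nat \<Rightarrow> real" and p pu \<rho>u :: real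
  assumes "\<forall>l<r. \<alpha> l > 0" and "p \<ge> 1" and "pu \<ge> 1" and "\<rho>u > 0"
    and "\<forall>l<r. \<delta> l > 0"
  shows "(\<forall>(x :: nat \<Rightarrow> real) (u :: nat \<Rightarrow> nat \<Rightarrow> real).
            (\<forall>m<s. x m \<ge> 0) \<and> (\<forall>l<r. \<forall>m<s. u l m > 0)
            \<and> lp_norm pu ({..<r} \<times> {..<s}) (\<lambda>(l, m). u l m) \<le> \<rho>u
            \<longrightarrow> (\<Sum>l<r. \<delta> l powr p * (\<Sum>m<s. u l m * x m) powr (p * \<alpha> l)) powr (1 / p)
                \<le> Psi r \<alpha> p pu \<delta> (\<rho>u * dual_norm pu {..<s} x))
       \<and> (\<forall>(t :: real) (\<delta>' :: nat \<Rightarrow> real) (t' :: real).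
            0 < t \<and> t \<le> t' \<and> (\<forall>l<r. \<delta> l \<le> \<delta>' l)
            \<longrightarrow> Psi r \<alpha> p pu \<delta> t \<le> Psi r \<alpha> p pu \<delta>' t'
                \<and> Psi r \<alpha> p pu \<delta>' t' \<le> (\<Sum>l<r. \<delta>' l * t' powr \<alpha> l))"
proof (intro conjI allI impI; (elim conjE)?)
  fix x :: "nat \<Rightarrow> real" and u :: "nat \<Rightarrow> nat \<Rightarrow> real"
  assume "\<forall>m<s. x m \<ge> 0" "\<forall>l<r. \<forall>m<s. u l m > 0"
    and "lp_norm pu ({..<r} \<times> {..<s}) (\<lambda>(l, m). u l m) \<le> \<rho>u"
  then show "(\<Sum>l<r. \<delta> l powr p * (\<Sum>m<s. u l m * x m) powr (p * \<alpha> l)) powr (1 / p)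
      \<le> Psi r \<alpha> p pu \<delta> (\<rho>u * dual_norm pu {..<s} x)"
    using assms by (intro Psi_bound) (auto simp: less_imp_le)
next
  fix t t' :: real and \<delta>' :: "nat \<Rightarrow> real"
  assume "0 < t" "t \<le> t'" "\<forall>l<r. \<delta> l \<le> \<delta>' l"
  then show "Psi r \<alpha> p pu \<delta> t \<le> Psi r \<alpha> p pu \<delta>' t'"
    using assms by (intro Psi_mono) (auto simp: less_imp_le)
  have "\<forall>l<r. 0 \<le> \<delta>' l"
    using assms(5) \<open>\<forall>l<r. \<delta> l \<le> \<delta>' l\<close> by (meson less_le_trans less_imp_le)
  then show "Psi r \<alpha> p pu \<delta>' t' \<le> (\<Sum>l<r. \<delta>' l * t' powr \<alpha> l)"
    using assms(1,2) by (rule Psi_le_sum[rotated 2])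
qed

end
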